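(* Let $n\ge0$ and $k\ge1$ be integers, $\rho\ne0$ real, $0\le q<1$, and $z$ a complex number. Then $$\sum_{m=0}^n S_1\!\left(n,m,\frac{z}{\rho}\right)\rho^{-m}B_{m,\rho,q}^{(k)}(z)=\frac{n!}{\rho^n[n+1]_q^k},$$ $$\sum_{m=0}^n S_2\!\left(n,m,\frac{z}{\rho}\right)\rho^{-m}c_{m,\rho,q}^{(k)}(z)=\frac{1}{\rho^n[n+1]_q^k},$$ $$\sum_{m=0}^n S_2\!\left(n,m,-\frac{z}{\rho}\right)\rho^{-m}\widehat c_{m,\rho,q}^{(k)}(z)=\frac{(-1)^n}{\rho^n[n+1]_q^k}.$$
   Context: For real $0\le q<1$ (with $0^0=1$), $[x]_q=\frac{1-q^x}{1-q}$. ${\rm Li}_{k,q}(w)=\sum_{m\ge1}w^m/[m]_q^k$. The $q$-poly-Bernoulli polynomials with parameter $\rho$: $\frac{\rho}{1-e^{-\rho t}}{\rm Li}_{k,q}\left(\frac{1-e^{-\rho t}}{\rho}\right)e^{-tz}=\sum_{n\ge0} B_{n,\rho,q}^{(k)}(z)\frac{t^n}{n!}$ (formal power series in $t$). Jackson's $q$-integral: $\int_0^1 f(x)\,d_qx=(1-q)\sum_{j\ge0} f(q^j)q^j$; multiple integrals are iterated. $(x)_n=x(x-1)\cdots(x-n+1)$, $(x)_0=1$. The $q$-poly-Cauchy polynomials of the first and second kind with parameter $\rho$ are $c_{n,\rho,q}^{(k)}(z)=\rho^n\int_0^1\cdots\int_0^1\left(\frac{x_1\cdots x_k-z}{\rho}\right)_n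 d_qx_1\cdots d_qx_k$ and $\widehat c_{n,\rho,q}^{(k)}(z)=\rho^n\int_0^1\cdots\int_0^1\left(\frac{-x_1\cdots x_k+z}{\rho}\right)_n d_qx_1\cdots d_qx_k$ ($k$-fold). Weighted Stirling numbers (Carlitz): $\frac{(1-t)^{-x}(-\ln(1-t))^m}{m!}=\sum_{n\ge0}S_1(n,m,x)\frac{t^n}{n!}$ and $\frac{e^{xt}(e^t-1)^m}{m!}=\sum_{n\ge0}S_2(n,m,x)\frac{t^n}{n!}$. *)

theory Defs
  imports Complex_Main "HOL-Computational_Algebra.Formal_Power_Series"
begin

definition qnum :: "real \<Rightarrow> nat \<Rightarrow> real" where
  "qnum q x = (1 - q ^ x) / (1 - q)"

definition qpolylog_fps :: "nat \<Rightarrow> real \<Rightarrow> complex fps" where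
  "qpolylog_fps k q = Abs_fps (\<lambda>m. if m = 0 then 0 else 1 / (complex_of_real (qnum q m)) ^ k)"

text \<open>q-poly-Bernoulli polynomials: the generating function
  rho/(1 - e^{-rho t}) * Li_{k,q}((1 - e^{-rho t})/rho) * e^{-t z}
  is written as Li_{k,q}(u(t)) / u(t) * e^{-t z} with u(t) = (1 - e^{-rho t})/rho
  (u has zero constant term and Li_{k,q}(u) is divisible by u in the power series ring).\<close>
definition qpB_fps :: "nat \<Rightarrow> real \<Rightarrow> real \<Rightarrow> complex \<Rightarrow> complex fps" where
  "qpB_fps k \<rho> q z =
     (let u = fps_const (complex_of_real (1 / \<rho>)) * (1 - fps_exp (- complex_of_real \<rho>))
      in (fps_compose (qpolylog_fps k q) u / u) * fps_exp (- z))"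

definition qpoly_bernoulli :: "nat \<Rightarrow> nat \<Rightarrow> real \<Rightarrow> real \<Rightarrow> complex \<Rightarrow> complex" where
  "qpoly_bernoulli k n \<rho> q z = fact n * fps_nth (qpB_fps k \<rho> q z) n"

definition jackson_int :: "real \<Rightarrow> (real \<Rightarrow> complex) \<Rightarrow> complex" where
  "jackson_int q f = complex_of_real (1 - q) * (\<Sum>j. f (q ^ j) * complex_of_real (q ^ j))"

fun jackson_multi :: "real \<Rightarrow> nat \<Rightarrow> (real list \<Rightarrow> complex) \<Rightarrow> complex" where
  "jackson_multi q 0 F = F []"
| "jackson_multi q (Suc k) F = jackson_int q (\<lambda>x. jackson_multi q k (\<lambda>xs. F (x # xs)))"

definition falling :: "complex \<Rightarrow> nat \<Rightarrow> complex" where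
  "falling x n = (\<Prod>i<n. x - of_nat i)"

definition qpoly_cauchy1 :: "nat \<Rightarrow> nat \<Rightarrow> real \<Rightarrow> real \<Rightarrow> complex \<Rightarrow> complex" where
  "qpoly_cauchy1 k n \<rho> q z = complex_of_real \<rho> ^ n *
     jackson_multi q k (\<lambda>xs. falling ((complex_of_real (prod_list xs) - z) / complex_of_real \<rho>) n)"

definition qpoly_cauchy2 :: "nat \<Rightarrow> nat \<Rightarrow> real \<Rightarrow> real \<Rightarrow> complex \<Rightarrow> complex" where
  "qpoly_cauchy2 k n \<rho> q z = complex_of_real \<rho> ^ n *
     jackson_multi q k (\<lambda>xs. falling ((- complex_of_real (prod_list xs) + z) / complex_of_real \<rho>) n)"

text \<open>Weighted Stirling numbers (Carlitz), via exponential generating functions.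
  (1-t)^{-x} = fps_binomial (-x) composed with -t;  -ln(1-t) = -(ln(1+s) at s = -t).\<close>
definition wstirling1 :: "nat \<Rightarrow> nat \<Rightarrow> complex \<Rightarrow> complex" where
  "wstirling1 n m x = fact n * fps_nth
     (fps_compose (fps_binomial (- x)) (- fps_X)
      * (- fps_compose (fps_ln 1) (- fps_X)) ^ m / fps_const (fact m)) n"

definition wstirling2 :: "nat \<Rightarrow> nat \<Rightarrow> complex \<Rightarrow> complex" where
  "wstirling2 n m x = fact n * fps_nth
     (fps_exp x * (fps_exp 1 - 1) ^ m / fps_const (fact m)) n"

end

theory Submission
  imports Defs "HOL-Computational_Algebra.Polynomial"
begin

text \<open>
  Bernoulli case: substituting t := -ln(1-t)/\<rho> into the generating function of B_m turns
  (1 - e^(-\<rho>t))/\<rho> into t/\<rho> and e^(-tz) into (1-t)^(z/\<rho>), which cancels the weight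
  (1-t)^(-z/\<rho>) of S_1; what remains is Li_{k,q}(t/\<rho>)/(t/\<rho>), whose n-th coefficient is
  \<rho>^(-n)/[n+1]_q^k.

  Cauchy cases: \<Sum>_m S_2(n,m,a) (w)_m = (a+w)^n (substitute t := e^t - 1 into (1+t)^w), so the
  weighted sum of the integrands collapses to (\<plusminus>x_1\<cdots>x_k/\<rho>)^n, and the k-fold Jackson integral
  of (x_1\<cdots>x_k)^i is 1/[i+1]_q^k, the Jackson integral of x^i being a geometric series.
  Writing the integrands as polynomials in x_1\<cdots>x_k makes the Jackson integral linear
  in them.
\<close>

unbundle fps_syntax

lemma qpower_geometric_sums:
  fixes q :: real
  assumes "0 \<le> q" "q < 1"
  shows "(\<lambda>j. complex_of_real (q ^ j) ^ i * complex_of_real (q ^ j))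
           sums (1 / complex_of_real (1 - q ^ Suc i))"
proof -
  have "q ^ Suc i \<le> q"
    using assms by (simp add: mult_left_le power_le_one)
  then have "norm (complex_of_real (q ^ Suc i)) < 1"
    unfolding norm_of_real using assms by simp
  moreover have "complex_of_real (q ^ j) ^ i * complex_of_real (q ^ j) = complex_of_real (q ^ Suc i) ^ j"
    for j by (simp flip: of_real_power of_real_mult power_mult add: power_mult_distrib mult.commute)
  ultimately show ?thesis
    using geometric_sums by fastforce
qed

lemma jackson_int_power_sum:
  assumes "0 \<le> q" "q < 1"
  shows "jackson_int q (\<lambda>x. \<Sum>i<N. b i * complex_of_real x ^ i)
           = (\<Sum>i<N. b i / complex_of_real (qnum q (Suc i)))"
proof -
  have "(\<lambda>j. (\<Sum>i<N. b i * complex_of_real (q ^ j) ^ i) * complex_of_real (q ^ j))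
          sums (\<Sum>i<N. b i * (1 / complex_of_real (1 - q ^ Suc i)))"
    unfolding sum_distrib_right mult.assoc
    by (intro sums_sum sums_mult qpower_geometric_sums assms)
  moreover have "complex_of_real (1 - q) * (b i * (1 / complex_of_real (1 - q ^ Suc i)))
                   = b i / complex_of_real (qnum q (Suc i))" for i
    using assms by (simp add: qnum_def)
  ultimately show ?thesis
    unfolding jackson_int_def by (simp add: sums_unique[symmetric] sum_distrib_left)
qed

lemma jackson_multi_power_sum:
  assumes "0 \<le> q" "q < 1"
  shows "jackson_multi q k (\<lambda>xs. \<Sum>i<N. a i * (c * complex_of_real (prod_list xs)) ^ i)
           = (\<Sum>i<N. a i * c ^ i / complex_of_real (qnum q (Suc i)) ^ k)"
proof (induction k arbitrary: c)
  case 0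
  then show ?case by simp
next
  case (Suc k)
  have "jackson_multi q (Suc k) (\<lambda>xs. \<Sum>i<N. a i * (c * complex_of_real (prod_list xs)) ^ i)
      = jackson_int q (\<lambda>x. jackson_multi q k
          (\<lambda>xs. \<Sum>i<N. a i * ((c * complex_of_real x) * complex_of_real (prod_list xs)) ^ i))"
    by (simp add: mult.assoc)
  also have "\<dots> = jackson_int q (\<lambda>x. \<Sum>i<N.
                    (a i * c ^ i / complex_of_real (qnum q (Suc i)) ^ k) * complex_of_real x ^ i)"
    by (simp only: Suc.IH) (simp add: power_mult_distrib mult_ac)
  also have "\<dots> = (\<Sum>i<N. (a i * c ^ i / complex_of_real (qnum q (Suc i)) ^ k)
                                / complex_of_real (qnum q (Suc i)))"
    by (rule jackson_int_power_sum[OF assms])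
  also have "\<dots> = (\<Sum>i<N. a i * c ^ i / complex_of_real (qnum q (Suc i)) ^ Suc k)"
    by (simp add: field_simps)
  finally show ?case .
qed

lemma jackson_multi_poly:
  fixes p :: "complex poly"
  assumes "0 \<le> q" "q < 1" and "degree p < N"
  shows "jackson_multi q k (\<lambda>xs. poly p (complex_of_real (prod_list xs)))
           = (\<Sum>i<N. coeff p i / complex_of_real (qnum q (Suc i)) ^ k)"
proof -
  have "poly p y = (\<Sum>i<N. coeff p i * (1 * y) ^ i)" for y
    unfolding poly_altdef mult_1
    by (rule sum.mono_neutral_left) (use assms(3) in \<open>auto simp: coeff_eq_0\<close>)
  then show ?thesis
    using jackson_multi_power_sum[OF assms(1,2), where a = "coeff p" and c = 1] by simp
qed

lemma jackson_multi_poly_sum: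
  fixes P :: "'a \<Rightarrow> complex poly"
  assumes "0 \<le> q" "q < 1" and "finite A"
  shows "(\<Sum>m\<in>A. s m * jackson_multi q k (\<lambda>xs. poly (P m) (complex_of_real (prod_list xs))))
           = jackson_multi q k (\<lambda>xs. poly (\<Sum>m\<in>A. smult (s m) (P m)) (complex_of_real (prod_list xs)))"
proof -
  define W where "W i = complex_of_real (qnum q (Suc i)) ^ k" for i
  define N where "N = Suc (Max (insert 0 (degree ` P ` A)))"
  have deg: "degree (P m) < N" if "m \<in> A" for m
    using that assms(3) by (auto simp: N_def less_Suc_eq_le)
  then have "degree (\<Sum>m\<in>A. smult (s m) (P m)) < N"
    using assms(3) degree_sum_le[of A "\<lambda>m. smult (s m) (P m)" "N - 1"]
    by (simp add: less_eq_Suc_le N_def)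
  then have "jackson_multi q k (\<lambda>xs. poly (\<Sum>m\<in>A. smult (s m) (P m)) (complex_of_real (prod_list xs)))
           = (\<Sum>i<N. (\<Sum>m\<in>A. s m * coeff (P m) i) / W i)"
    by (simp add: jackson_multi_poly[OF assms(1,2)] W_def coeff_sum)
  also have "\<dots> = (\<Sum>m\<in>A. s m * (\<Sum>i<N. coeff (P m) i / W i))"
    by (simp add: sum_divide_distrib sum_distrib_left sum.swap[of _ A] mult_ac)
  also have "\<dots> = (\<Sum>m\<in>A. s m * jackson_multi q k (\<lambda>xs. poly (P m) (complex_of_real (prod_list xs))))"
    by (intro sum.cong refl) (simp add: jackson_multi_poly[OF assms(1,2) deg] W_def)
  finally show ?thesis ..
qed

lemma fps_mult_compose_nth:
  fixes G F N :: "'a::comm_ring_1 fps"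
  assumes "N $ 0 = 0"
  shows "(G * (F oo N)) $ n = (\<Sum>m=0..n. F $ m * (G * N ^ m) $ n)"
proof -
  have "(F oo N) $ j = (\<Sum>m=0..n. fps_const (F $ m) * N ^ m) $ j" if "j \<le> n" for j
  proof -
    have "(F oo N) $ j = (\<Sum>m=0..j. F $ m * (N ^ m $ j))"
      by (simp add: fps_compose_nth)
    also have "\<dots> = (\<Sum>m=0..n. F $ m * (N ^ m $ j))"
      by (rule sum.mono_neutral_left) (use that startsby_zero_power_prefix[OF assms] in auto)
    finally show ?thesis by (simp add: fps_sum_nth)
  qed
  then have "(G * (F oo N)) $ n = (G * (\<Sum>m=0..n. fps_const (F $ m) * N ^ m)) $ n"
    unfolding fps_mult_nth by (intro sum.cong) auto
  also have "\<dots> = (\<Sum>m=0..n. F $ m * (G * N ^ m) $ n)"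
    by (simp add: sum_distrib_left fps_sum_nth mult.left_commute[of G])
  finally show ?thesis .
qed

lemma fps_exp_compose_ln: "fps_exp (c::'a::field_char_0) oo fps_ln 1 = fps_binomial c"
proof -
  let ?D = "fps_exp c oo fps_ln 1"
  have "fps_deriv ?D = (fps_const c * fps_exp c oo fps_ln 1) * inverse (1 + fps_X)"
    by (simp add: fps_compose_deriv fps_ln_deriv)
  also have "\<dots> = (fps_const c * ?D) / (1 + fps_X)"
    by (simp add: fps_divide_unit fps_const_mult_apply_left)
  finally have "?D = fps_const (?D $ 0) * fps_binomial c"
    using fps_binomial_ODE_unique by blast
  then show ?thesis by simp
qed

lemma fps_binomial_compose_exp: "fps_binomial (c::'a::field_char_0) oo (fps_exp 1 - 1) = fps_exp c"
proof -
  have "fps_binomial c oo (fps_exp 1 - 1) = fps_exp c oo (fps_ln 1 oo (fps_exp 1 - 1))"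
    by (simp add: fps_exp_compose_ln[symmetric] fps_compose_assoc)
  also have "fps_ln 1 oo (fps_exp 1 - 1) = (fps_X :: 'a fps)"
    by (simp add: fps_ln_fps_exp_inv fps_inv_fps_exp_compose)
  finally show ?thesis by simp
qed

lemma fps_exp_compose_neg_ln:
  "fps_exp (d::'a::field_char_0) oo (fps_const c * - (fps_ln 1 oo - fps_X))
     = fps_binomial (- (c * d)) oo - fps_X"
proof -
  let ?L = "fps_ln 1 oo - fps_X :: 'a fps"
  have linear: "fps_const c * - ?L = (fps_const (- c) * fps_X) oo ?L"
    by (simp add: fps_compose_uminus flip: fps_const_mult_apply_left fps_const_neg)
  have "fps_exp d oo (fps_const c * - ?L) = (fps_exp d oo (fps_const (- c) * fps_X)) oo ?L"
    unfolding linear by (rule fps_compose_assoc) simp_all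
  also have "\<dots> = fps_exp (- (c * d)) oo ?L"
    by simp
  also have "\<dots> = (fps_exp (- (c * d)) oo fps_ln 1) oo - fps_X"
    by (rule fps_compose_assoc) simp_all
  finally show ?thesis
    by (simp add: fps_exp_compose_ln)
qed

lemma fps_divide_const_nth: "(f / fps_const (c::'a::field)) $ n = f $ n / c"
  by (cases "c = 0") (simp_all add: fps_divide_unit fps_const_inverse divide_inverse mult.commute)

lemma wstirling2_falling_sum: "(\<Sum>m=0..n. wstirling2 n m a * falling w m) = (a + w) ^ n"
proof -
  let ?E = "fps_exp 1 - 1 :: complex fps"
  have "wstirling2 n m a * falling w m = fact n * (fps_binomial w $ m * (fps_exp a * ?E ^ m) $ n)"
    for m
  proof -
    have "falling w m = (w gchoose m) * fact m"
      by (simp add: falling_def gbinomial_mult_fact' atLeast0LessThan)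
    moreover have "wstirling2 n m a = fact n * (fps_exp a * ?E ^ m) $ n / fact m"
      unfolding wstirling2_def fps_divide_const_nth by simp
    ultimately show ?thesis
      by (simp add: fps_binomial_def)
  qed
  then have "(\<Sum>m=0..n. wstirling2 n m a * falling w m)
               = fact n * (fps_exp a * (fps_binomial w oo ?E)) $ n"
    by (simp add: fps_mult_compose_nth sum_distrib_left)
  also have "\<dots> = (a + w) ^ n"
    unfolding fps_binomial_compose_exp fps_exp_add_mult[symmetric] by (simp add: fps_exp_def)
  finally show ?thesis .
qed

lemma falling_affine_poly: "falling (c * y - d) m = poly (\<Prod>i<m. [:- d - of_nat i, c:]) y"
  unfolding falling_def poly_prod by (intro prod.cong refl) simp

lemma wstirling2_jackson_falling_sum:
  assumes "0 \<le> q" "q < 1"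
  shows "(\<Sum>m=0..n. wstirling2 n m d
            * jackson_multi q k (\<lambda>xs. falling (c * complex_of_real (prod_list xs) - d) m))
           = c ^ n / complex_of_real (qnum q (Suc n)) ^ k"
proof -
  define P where "P m = (\<Prod>i<m. [:- d - of_nat i, c:])" for m
  define Q where "Q = (\<Sum>m=0..n. smult (wstirling2 n m d) (P m))"
  have "poly Q y = poly (monom (c ^ n) n) y" for y
    using wstirling2_falling_sum[of n d "c * y - d"]
    by (simp add: Q_def P_def poly_sum poly_monom falling_affine_poly power_mult_distrib)
  then have Q: "Q = monom (c ^ n) n"
    using poly_eq_poly_eq_iff by blast
  have "(\<Sum>m=0..n. wstirling2 n m d
            * jackson_multi q k (\<lambda>xs. falling (c * complex_of_real (prod_list xs) - d) m))
          = jackson_multi q k (\<lambda>xs. poly Q (complex_of_real (prod_list xs)))"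
    unfolding falling_affine_poly P_def[symmetric] Q_def
    by (rule jackson_multi_poly_sum[OF assms]) simp
  also have "\<dots> = (\<Sum>i<Suc n. coeff (monom (c ^ n) n) i / complex_of_real (qnum q (Suc i)) ^ k)"
    unfolding Q by (rule jackson_multi_poly[OF assms]) (simp add: degree_monom_le le_imp_less_Suc)
  also have "\<dots> = c ^ n / complex_of_real (qnum q (Suc n)) ^ k"
    by simp
  finally show ?thesis .
qed

lemma wstirling2_qpoly_cauchy1_sum:
  assumes "\<rho> \<noteq> 0" "0 \<le> q" "q < 1"
  shows "(\<Sum>m=0..n. wstirling2 n m (z / complex_of_real \<rho>) * complex_of_real \<rho> powi (- int m)
            * qpoly_cauchy1 k m \<rho> q z)
           = 1 / (complex_of_real \<rho> ^ n * complex_of_real (qnum q (n + 1)) ^ k)"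
proof -
  define r where "r = complex_of_real \<rho>"
  have "r \<noteq> 0"
    using assms(1) by (simp add: r_def)
  then have "r powi (- int m) * qpoly_cauchy1 k m \<rho> q z
      = jackson_multi q k (\<lambda>xs. falling (1 / r * complex_of_real (prod_list xs) - z / r) m)" for m
    by (simp add: qpoly_cauchy1_def power_int_minus diff_divide_distrib flip: r_def)
  then show ?thesis
    using wstirling2_jackson_falling_sum[OF assms(2,3), of n "z / r" k "1 / r"]
    by (simp add: mult.assoc power_one_over flip: r_def)
qed

lemma wstirling2_qpoly_cauchy2_sum:
  assumes "\<rho> \<noteq> 0" "0 \<le> q" "q < 1"
  shows "(\<Sum>m=0..n. wstirling2 n m (- z / complex_of_real \<rho>) * complex_of_real \<rho> powi (- int m)
            * qpoly_cauchy2 k m \<rho> q z)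
           = (- 1) ^ n / (complex_of_real \<rho> ^ n * complex_of_real (qnum q (n + 1)) ^ k)"
proof -
  define r where "r = complex_of_real \<rho>"
  have "r \<noteq> 0"
    using assms(1) by (simp add: r_def)
  then have "r powi (- int m) * qpoly_cauchy2 k m \<rho> q z
      = jackson_multi q k (\<lambda>xs. falling (- 1 / r * complex_of_real (prod_list xs) - - z / r) m)" for m
    by (simp add: qpoly_cauchy2_def power_int_minus diff_divide_distrib flip: r_def)
  then have "(\<Sum>m=0..n. wstirling2 n m (- z / r) * r powi (- int m) * qpoly_cauchy2 k m \<rho> q z)
      = (- 1 / r) ^ n / complex_of_real (qnum q (Suc n)) ^ k"
    using wstirling2_jackson_falling_sum[OF assms(2,3), of n "- z / r" k "- 1 / r"]
    by (simp only: mult.assoc)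
  then show ?thesis
    by (simp only: power_divide divide_divide_eq_left Suc_eq_plus1 flip: r_def)
qed

lemma qpB_fps_altdef:
  assumes "\<rho> \<noteq> 0"
  shows "qpB_fps k \<rho> q z
           = (fps_shift 1 (qpolylog_fps k q)
               oo (fps_const (complex_of_real (1 / \<rho>)) * (1 - fps_exp (- complex_of_real \<rho>))))
             * fps_exp (- z)"
proof -
  define U where "U = fps_const (complex_of_real (1 / \<rho>)) * (1 - fps_exp (- complex_of_real \<rho>))"
  define L where "L = qpolylog_fps k q"
  have U0: "U $ 0 = 0"
    by (simp add: U_def)
  have "U $ 1 = 1"
    using assms by (simp add: U_def)
  then have "U \<noteq> 0"
    by auto
  have "L = fps_shift 1 L * fps_X"
    by (rule fps_ext) (simp add: L_def qpolylog_fps_def)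
  then have "L oo U = (fps_shift 1 L oo U) * U"
    by (metis U0 fps_X_fps_compose_startby0 fps_compose_mult_distrib)
  then have "(L oo U) / U = fps_shift 1 L oo U"
    using \<open>U \<noteq> 0\<close> by simp
  then show ?thesis
    unfolding qpB_fps_def Let_def U_def[symmetric] L_def[symmetric] by simp
qed

lemma qpB_fps_compose_neg_ln:
  assumes "\<rho> \<noteq> 0"
  defines "r \<equiv> complex_of_real \<rho>"
  shows "(fps_binomial (- (z / r)) oo - fps_X)
           * (qpB_fps k \<rho> q z oo (fps_const (1 / r) * - (fps_ln 1 oo - fps_X)))
           = fps_shift 1 (qpolylog_fps k q) oo (fps_const (1 / r) * fps_X)"
proof -
  define N where "N = fps_const (1 / r) * - (fps_ln 1 oo - fps_X)"
  define U where "U = fps_const (1 / r) * (1 - fps_exp (- r))"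
  have N0: "N $ 0 = 0" and U0: "U $ 0 = 0"
    by (simp_all add: N_def U_def)
  have "r \<noteq> 0"
    using assms by simp
  have "U oo N = fps_const (1 / r) * (1 - (fps_exp (- r) oo N))"
    by (simp only: U_def fps_const_mult_apply_left[symmetric] fps_compose_sub_distrib fps_compose_1)
  also have "fps_exp (- r) oo N = fps_binomial 1 oo - fps_X"
    using fps_exp_compose_neg_ln[of "- r" "1 / r"] \<open>r \<noteq> 0\<close> unfolding N_def by simp
  finally have UN: "U oo N = fps_const (1 / r) * fps_X"
    by (simp add: fps_binomial_1 fps_compose_add_distrib)
  have "qpB_fps k \<rho> q z oo N
          = (fps_shift 1 (qpolylog_fps k q) oo (U oo N)) * (fps_exp (- z) oo N)"
    unfolding qpB_fps_altdef[OF assms(1)] of_real_divide of_real_1 r_def[symmetric] U_def[symmetric]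
    by (simp only: fps_compose_mult_distrib[OF N0] fps_compose_assoc[OF N0 U0])
  also have "fps_exp (- z) oo N = fps_binomial (z / r) oo - fps_X"
    using fps_exp_compose_neg_ln[of "- z" "1 / r"] unfolding N_def by simp
  finally have "(fps_binomial (- (z / r)) oo - fps_X) * (qpB_fps k \<rho> q z oo N)
      = (fps_shift 1 (qpolylog_fps k q) oo (U oo N))
        * ((fps_binomial (- (z / r)) * fps_binomial (z / r)) oo - fps_X)"
    by (simp add: fps_compose_mult_distrib[symmetric] mult_ac)
  also have "fps_binomial (- (z / r)) * fps_binomial (z / r) = 1"
    by (simp flip: fps_binomial_add_mult)
  finally show ?thesis
    unfolding N_def[symmetric] by (simp add: UN)
qed

lemma wstirling1_qpoly_bernoulli_sum:
  assumes "\<rho> \<noteq> 0"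
  shows "(\<Sum>m=0..n. wstirling1 n m (z / complex_of_real \<rho>) * complex_of_real \<rho> powi (- int m)
            * qpoly_bernoulli k m \<rho> q z)
           = fact n / (complex_of_real \<rho> ^ n * complex_of_real (qnum q (n + 1)) ^ k)"
proof -
  define r where "r = complex_of_real \<rho>"
  define Bin where "Bin = fps_binomial (- (z / r)) oo - fps_X"
  define M where "M = - (fps_ln 1 oo - fps_X :: complex fps)"
  define N where "N = fps_const (1 / r) * M"
  define B where "B = qpB_fps k \<rho> q z"
  have "wstirling1 n m (z / r) * r powi (- int m) * qpoly_bernoulli k m \<rho> q z
          = fact n * (B $ m * (Bin * N ^ m) $ n)" for m
  proof -
    have "wstirling1 n m (z / r) = fact n * (Bin * M ^ m) $ n / fact m"
      unfolding wstirling1_def fps_divide_const_nth by (simp add: Bin_def M_def)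
    moreover have "(Bin * N ^ m) $ n = (1 / r) ^ m * (Bin * M ^ m) $ n"
      by (simp add: N_def power_mult_distrib mult.left_commute[of Bin])
    ultimately show ?thesis
      by (simp add: qpoly_bernoulli_def B_def power_int_minus power_one_over inverse_eq_divide)
  qed
  then have "(\<Sum>m=0..n. wstirling1 n m (z / r) * r powi (- int m) * qpoly_bernoulli k m \<rho> q z)
               = fact n * (Bin * (B oo N)) $ n"
    by (simp add: fps_mult_compose_nth N_def M_def sum_distrib_left)
  also have "\<dots> = fact n * ((1 / r) ^ n * qpolylog_fps k q $ Suc n)"
    using qpB_fps_compose_neg_ln[OF assms] by (simp add: Bin_def B_def N_def M_def r_def)
  also have "\<dots> = fact n / (r ^ n * complex_of_real (qnum q (n + 1)) ^ k)"
    by (simp add: qpolylog_fps_def power_one_over)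
  finally show ?thesis
    by (simp only: r_def)
qed

theorem theorem6:
  fixes n k :: nat and \<rho> q :: real and z :: complex
  assumes "k \<ge> 1" and "\<rho> \<noteq> 0" and "0 \<le> q" and "q < 1"
  shows "((\<Sum>m=0..n. wstirling1 n m (z / complex_of_real \<rho>) * complex_of_real \<rho> powi (- int m)
            * qpoly_bernoulli k m \<rho> q z)
           = fact n / (complex_of_real \<rho> ^ n * complex_of_real (qnum q (n + 1)) ^ k))
       \<and> ((\<Sum>m=0..n. wstirling2 n m (z / complex_of_real \<rho>) * complex_of_real \<rho> powi (- int m)
            * qpoly_cauchy1 k m \<rho> q z)
           = 1 / (complex_of_real \<rho> ^ n * complex_of_real (qnum q (n + 1)) ^ k))
       \<and> ((\<Sum>m=0..n. wstirling2 n m (- z / complex_of_real \<rho>) * complex_of_real \<rho> powi (- int m)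
            * qpoly_cauchy2 k m \<rho> q z)
           = (- 1) ^ n / (complex_of_real \<rho> ^ n * complex_of_real (qnum q (n + 1)) ^ k))"
  using wstirling1_qpoly_bernoulli_sum[OF assms(2)]
    wstirling2_qpoly_cauchy1_sum[OF assms(2-4)] wstirling2_qpoly_cauchy2_sum[OF assms(2-4)]
  by blast

end
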